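(* Let $\mathcal M^\star\subset\mathbb R^D$ be a closed embedded submanifold with nearest-point projection $\pi^\star$, let $0<\tau<t_0$, and suppose for some $r<\mathrm{reach}(\mathcal M^\star)$ that $\hat s(x,t)=-\frac{x-\pi^\star(x)}{t}+\frac{e(x,t)}{t}$ for all $t\in[\tau,t_0]$, $x\in\mathcal T_r(\mathcal M^\star)$, with $\varepsilon:=\sup_{t\in[\tau,t_0],x\in\mathcal T_r(\mathcal M^\star)}\|e(x,t)\|$. Let $\bar X_t$ solve $\mathrm d\bar X_t=\frac12\hat s(\bar X_t,t_0-t)\,\mathrm dt$ for $t\in[0,t_0-\tau]$, set $a_0:=\frac12\operatorname{dist}^2(\bar X_0,\mathcal M^\star)$, and suppose $\sqrt{a_0}\ge\varepsilon$. Then \[\|\bar X_{t_0-\tau}-\bar X_0\|\le\operatorname{dist}(\bar X_0,\mathcal M^\star)+\mathcal O\!\Big(\varepsilon\ln\frac{t_0}{\tau}\Big).\]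
   Context: Reach: largest $r$ such that every point at distance $<r$ from $\mathcal M^\star$ has a unique nearest point. $\mathcal T_r(\mathcal M):=\{x:\operatorname{dist}(x,\mathcal M)<r\}$. *)

theory Defs
  imports "HOL-Analysis.Analysis"
begin

fun Ck_on :: "nat \<Rightarrow> (real^'n) set \<Rightarrow> (real^'n \<Rightarrow> real) \<Rightarrow> bool" where
  "Ck_on 0 U f = continuous_on U f"
| "Ck_on (Suc k) U f = (f differentiable_on U \<and>
      (\<forall>i. Ck_on k U (\<lambda>x. frechet_derivative f (at x) (axis i 1))))"

definition smooth_on :: "(real^'n) set \<Rightarrow> (real^'n \<Rightarrow> real^'m) \<Rightarrow> bool" where
  "smooth_on U f = (\<forall>k j. Ck_on k U (\<lambda>x. f x $ j))"

definition embedded_submanifold :: "(real^'n) set \<Rightarrow> bool" where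
  "embedded_submanifold M = (\<exists>d. \<forall>p\<in>M. \<exists>U V (\<phi> :: real^'n \<Rightarrow> real^'n) (\<psi> :: real^'n \<Rightarrow> real^'n) S.
      open U \<and> p \<in> U \<and> open V \<and> \<phi> ` U = V \<and>
      (\<forall>x\<in>U. \<psi> (\<phi> x) = x) \<and> (\<forall>y\<in>V. \<phi> (\<psi> y) = y) \<and>
      smooth_on U \<phi> \<and> smooth_on V \<psi> \<and>
      subspace S \<and> dim S = d \<and> \<phi> ` (M \<inter> U) = V \<inter> S)"

text \<open>Nearest-point projection (meaningful where the nearest point is unique).\<close>
definition nearest_proj :: "(real^'n) set \<Rightarrow> real^'n \<Rightarrow> real^'n" where
  "nearest_proj M x = (THE y. y \<in> M \<and> dist x y = infdist x M)"

definition reach :: "(real^'n) set \<Rightarrow> ereal" where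
  "reach M = Sup {ereal r | r. r \<ge> 0 \<and>
      (\<forall>x. infdist x M < r \<longrightarrow> (\<exists>!y. y \<in> M \<and> dist x y = infdist x M))}"

definition tube :: "real \<Rightarrow> (real^'n) set \<Rightarrow> (real^'n) set" where
  "tube r M = {x. infdist x M < r}"

end

theory Submission
  imports Defs
begin

(* Write D t for the distance of X t to M and s = t0 - t. Inside the tube the drift is
   (p - X t + e) / (2 s), p the nearest point, so a short step of length u moves X t the
   fraction u / (2 s) of the way to p, up to an error of size (u / (2 s)) * eps. Hence D obeys
   D' <= (eps - D) / (2 s) in the sense of right upper Dini derivatives, and comparison with the
   solution B t = eps + (D 0 - eps) * sqrt (s / t0) of the corresponding ODE (with a slack
   eta * t that is then sent to 0) gives D <= B <= D 0, which also keeps X inside the tube.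
   Integrating |X'| <= (B + eps) / (2 s) then bounds the displacement by
   (D 0 - eps) * (1 - sqrt (tau / t0)) + eps * ln (t0 / tau) <= D 0 + eps * ln (t0 / tau),
   so C = 1 works. *)

lemma continuous_nonpos_by_right_continuation:
  fixes f :: "real \<Rightarrow> real"
  assumes "a \<le> b" and cont: "continuous_on {a..b} f" and fa: "f a \<le> 0"
    and step: "\<And>x. a \<le> x \<Longrightarrow> x < b \<Longrightarrow> f x \<le> 0 \<Longrightarrow> \<exists>h>0. \<forall>y\<in>{x<..<x+h}. f y \<le> 0"
  shows "\<forall>x\<in>{a..b}. f x \<le> 0"
proof (rule ccontr)
  define K where "K = {x\<in>{a..b}. f x > 0}"
  assume "\<not> ?thesis"
  then obtain k where k: "k \<in> K" by (force simp: K_def)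
  have K_bdd: "bdd_below K" by (rule bdd_belowI[of _ a]) (auto simp: K_def)
  define c where "c = Inf K"
  have c_lower: "c \<le> x" if "x \<in> K" for x
    using K_bdd that by (simp add: c_def cInf_lower)
  have c_in: "c \<in> {a..b}"
    using c_lower[OF k] k by (auto simp: K_def c_def intro!: cInf_greatest)
  have below_c: "f y \<le> 0" if "y \<in> {a..<c}" for y
    using that c_in c_lower[of y] by (force simp: K_def)
  have fc: "f c \<le> 0"
  proof (rule ccontr)
    assume fc: "\<not> f c \<le> 0"
    with cont c_in obtain d where d: "d > 0" "\<forall>y\<in>{a..b}. dist y c < d \<longrightarrow> dist (f y) (f c) < f c"
      unfolding continuous_on_iff by (metis not_le)
    define y where "y = max a (c - d/2)"
    have "c \<noteq> a" using fa fc by auto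
    then have "y \<in> {a..<c}" "y \<in> {a..b}" "dist y c < d"
      using d c_in by (auto simp: y_def dist_real_def)
    then show False using d below_c[of y] by (force simp: dist_real_def)
  qed
  have "c \<noteq> k" using k fc by (auto simp: K_def)
  then have "c < b" using c_lower[OF k] k by (auto simp: K_def)
  then obtain h where h: "h > 0" "\<forall>y\<in>{c<..<c+h}. f y \<le> 0"
    using step[of c] c_in fc by auto
  have "Inf K < c + h" using h c_def by simp
  then obtain x where x: "x \<in> K" "x < c + h" using cInf_less_iff[OF _ K_bdd] k by blast
  moreover have "x \<noteq> c" using x fc by (auto simp: K_def)
  ultimately have "x \<in> {c<..<c+h}" using c_lower[OF x(1)] by auto
  then have "f x \<le> 0" using h(2) by blast
  then show False using x(1) by (simp add: K_def)
qed

lemma has_real_derivative_right_lower_bound: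
  fixes f :: "real \<Rightarrow> real"
  assumes "(f has_real_derivative f') (at x)" and "0 < \<eta>"
  shows "\<exists>h>0. \<forall>y\<in>{x<..<x+h}. f x + (y - x) * (f' - \<eta>) \<le> f y"
proof -
  have "(f has_derivative (\<lambda>z. z * f')) (at x within UNIV)"
    using assms(1) by (simp add: has_field_derivative_def mult_commute_abs)
  then obtain h where "h > 0"
    and h: "\<And>y. norm (y - x) < h \<Longrightarrow> norm (f y - f x - (y - x) * f') \<le> \<eta> * norm (y - x)"
    unfolding has_derivative_within_alt using assms(2) by blast
  have "f x + (y - x) * (f' - \<eta>) \<le> f y" if "y \<in> {x<..<x+h}" for y
    using h[of y] that by (simp add: abs_le_iff algebra_simps)
  with \<open>h > 0\<close> show ?thesis by blast
qed

lemma infdist_convex_step_le: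
  fixes x p E :: "'a::real_normed_vector"
  assumes "p \<in> M" and "0 \<le> \<theta>" and "\<theta> \<le> 1"
  shows "infdist (x + \<theta> *\<^sub>R (p - x + E)) M \<le> (1 - \<theta>) * dist x p + \<theta> * norm E"
proof -
  have "x + \<theta> *\<^sub>R (p - x + E) - p = (1 - \<theta>) *\<^sub>R (x - p) + \<theta> *\<^sub>R E"
    by (simp add: algebra_simps)
  then have "infdist (x + \<theta> *\<^sub>R (p - x + E)) M \<le> norm ((1 - \<theta>) *\<^sub>R (x - p) + \<theta> *\<^sub>R E)"
    using infdist_le[OF assms(1), of "x + \<theta> *\<^sub>R (p - x + E)"] by (simp add: dist_norm)
  also have "\<dots> \<le> (1 - \<theta>) * dist x p + \<theta> * norm E"
    using norm_triangle_ineq[of "(1 - \<theta>) *\<^sub>R (x - p)" "\<theta> *\<^sub>R E"] assms(2,3)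
    by (simp add: dist_norm)
  finally show ?thesis .
qed

lemma norm_increment_le_majorant_increment:
  fixes f :: "real \<Rightarrow> 'a::banach" and g :: "real \<Rightarrow> real"
  assumes "a \<le> b"
    and f: "\<And>t. t \<in> {a..b} \<Longrightarrow> (f has_vector_derivative f' t) (at t within {a..b})"
    and g: "\<And>t. t \<in> {a..b} \<Longrightarrow> (g has_real_derivative g' t) (at t within {a..b})"
    and le: "\<And>t. t \<in> {a..b} \<Longrightarrow> norm (f' t) \<le> g' t"
  shows "norm (f b - f a) \<le> g b - g a"
proof -
  have "(f' has_integral (f b - f a)) {a..b}"
    using fundamental_theorem_of_calculus[OF assms(1) f] .
  moreover have "(g' has_integral (g b - g a)) {a..b}"
    using fundamental_theorem_of_calculus[OF assms(1), of g g'] g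
    by (simp add: has_real_derivative_iff_has_vector_derivative)
  ultimately have "norm (f b - f a) \<le> (g b - g a) \<bullet> 1"
    by (rule has_integral_norm_bound_integral_component) (use le in simp)
  then show ?thesis by simp
qed

lemma nearest_proj_below_reach:
  assumes "ereal r < reach M" and "infdist x M < r"
  shows "nearest_proj M x \<in> M" and "dist x (nearest_proj M x) = infdist x M"
proof -
  obtain r' where "r < r'" and unique: "\<And>x. infdist x M < r' \<Longrightarrow> \<exists>!y. y \<in> M \<and> dist x y = infdist x M"
    using assms(1) unfolding reach_def less_Sup_iff by force
  then have "\<exists>!y. y \<in> M \<and> dist x y = infdist x M" using assms(2) by simp
  then have "nearest_proj M x \<in> M \<and> dist x (nearest_proj M x) = infdist x M"
    unfolding nearest_proj_def by (rule theI')
  then show "nearest_proj M x \<in> M" and "dist x (nearest_proj M x) = infdist x M" by auto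
qed

lemma has_real_derivative_sqrt_diff:
  assumes "t < t0"
  shows "((\<lambda>y. sqrt (t0 - y)) has_real_derivative - 1 / (2 * sqrt (t0 - t))) (at t)"
  using assms by (auto intro!: derivative_eq_intros simp: divide_simps)

locale score_flow =
  fixes M :: "(real^'n) set" and r \<tau> t0 :: real
    and shat e :: "real^'n \<Rightarrow> real \<Rightarrow> real^'n" and X :: "real \<Rightarrow> real^'n"
  assumes tau_pos: "0 < \<tau>" and tau_less: "\<tau> < t0"
    and below_reach: "ereal r < reach M"
    and score_eq: "\<And>t x. t \<in> {\<tau>..t0} \<Longrightarrow> x \<in> tube r M \<Longrightarrow>
      shat x t = - ((x - nearest_proj M x) /\<^sub>R t) + e x t /\<^sub>R t"
    and err_bdd: "bdd_above ((\<lambda>(x, t). norm (e x t)) ` (tube r M \<times> {\<tau>..t0}))"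
    and flow: "\<And>t. t \<in> {0..t0 - \<tau>} \<Longrightarrow>
      (X has_vector_derivative (1/2) *\<^sub>R shat (X t) (t0 - t)) (at t within {0..t0 - \<tau>})"
    and start_in_tube: "X 0 \<in> tube r M"
    and err_small: "(SUP (x, t) \<in> tube r M \<times> {\<tau>..t0}. norm (e x t)) \<le> sqrt ((1/2) * (infdist (X 0) M)\<^sup>2)"
begin

definition err_sup :: real where
  "err_sup = (SUP (x, t) \<in> tube r M \<times> {\<tau>..t0}. norm (e x t))"

definition dist0 :: real where
  "dist0 = infdist (X 0) M"

definition horizon :: real where
  "horizon = t0 - \<tau>"

definition dist_majorant :: "real \<Rightarrow> real" where
  "dist_majorant t = err_sup + (dist0 - err_sup) * sqrt (t0 - t) / sqrt t0"

definition disp_majorant :: "real \<Rightarrow> real" where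
  "disp_majorant t = (dist0 - err_sup) * (1 - sqrt (t0 - t) / sqrt t0) + err_sup * (ln t0 - ln (t0 - t))"

lemma t0_pos: "0 < t0" and horizon_pos: "0 < horizon" and horizon_less: "horizon < t0"
  using tau_pos tau_less by (auto simp: horizon_def)

lemma err_bound: "x \<in> tube r M \<Longrightarrow> t \<in> {\<tau>..t0} \<Longrightarrow> norm (e x t) \<le> err_sup"
  unfolding err_sup_def using cSUP_upper[OF _ err_bdd, of "(x, t)"] by simp

lemma err_sup_nonneg: "0 \<le> err_sup"
proof -
  have "norm (e (X 0) \<tau>) \<le> err_sup"
    using err_bound[OF start_in_tube] tau_less by simp
  then show ?thesis by (meson norm_ge_zero order_trans)
qed

lemma err_sup_le_dist0: "err_sup \<le> dist0"
proof -
  have "sqrt ((1/2) * dist0\<^sup>2) \<le> sqrt (dist0\<^sup>2)" by (rule real_sqrt_le_mono) simp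
  then show ?thesis
    using err_small infdist_nonneg[of "X 0" M] by (simp add: err_sup_def dist0_def)
qed

lemma dist0_less: "dist0 < r"
  using start_in_tube by (simp add: tube_def dist0_def)

lemma X_continuous: "continuous_on {0..horizon} X"
  unfolding continuous_on_eq_continuous_within horizon_def
  using flow has_vector_derivative_continuous by blast

lemma velocity_eq:
  assumes "t \<in> {0..horizon}" and "X t \<in> tube r M"
  shows "(1/2) *\<^sub>R shat (X t) (t0 - t) = (1 / (2 * (t0 - t))) *\<^sub>R (nearest_proj M (X t) - X t + e (X t) (t0 - t))"
proof -
  have "shat (X t) (t0 - t) = inverse (t0 - t) *\<^sub>R (nearest_proj M (X t) - X t + e (X t) (t0 - t))"
    using score_eq[OF _ assms(2), of "t0 - t"] assms(1) tau_pos
    by (simp add: horizon_def algebra_simps)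
  moreover have "(1/2) * inverse (t0 - t) = 1 / (2 * (t0 - t))"
    using assms(1) horizon_less by (simp add: field_simps)
  ultimately show ?thesis by (metis scaleR_scaleR)
qed

lemma norm_velocity_le:
  assumes "t \<in> {0..horizon}" and "X t \<in> tube r M"
  shows "norm ((1/2) *\<^sub>R shat (X t) (t0 - t)) \<le> (infdist (X t) M + err_sup) / (2 * (t0 - t))"
proof -
  define p where "p = nearest_proj M (X t)"
  define E where "E = e (X t) (t0 - t)"
  have s: "0 < t0 - t" using assms(1) horizon_less by simp
  have p: "dist (X t) p = infdist (X t) M"
    using nearest_proj_below_reach[OF below_reach] assms(2) by (simp add: p_def tube_def)
  have E: "norm E \<le> err_sup"
    using err_bound[OF assms(2)] assms(1) by (simp add: E_def horizon_def)
  have "norm (p - X t + E) \<le> norm (p - X t) + norm E" by (rule norm_triangle_ineq)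
  also have "\<dots> \<le> infdist (X t) M + err_sup"
    using p E by (simp add: dist_norm norm_minus_commute)
  finally have "norm (p - X t + E) / (2 * (t0 - t)) \<le> (infdist (X t) M + err_sup) / (2 * (t0 - t))"
    using s by (simp add: divide_right_mono)
  then show ?thesis
    using s by (simp add: velocity_eq[OF assms] p_def E_def)
qed

lemma has_derivative_dist_majorant:
  assumes "t < t0"
  shows "(dist_majorant has_real_derivative (err_sup - dist_majorant t) / (2 * (t0 - t))) (at t)"
proof -
  define q where "q = sqrt (t0 - t)"
  have q: "0 < q" "t0 - t = q * q" using assms by (simp_all add: q_def)
  have "(dist_majorant has_real_derivative 0 + (dist0 - err_sup) * (- 1 / (2 * sqrt (t0 - t))) / sqrt t0) (at t)"
    unfolding dist_majorant_def[abs_def]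
    by (intro DERIV_add DERIV_const DERIV_cdivide DERIV_cmult has_real_derivative_sqrt_diff assms)
  moreover have "0 + (dist0 - err_sup) * (- 1 / (2 * sqrt (t0 - t))) / sqrt t0
      = (err_sup - dist_majorant t) / (2 * (t0 - t))"
    unfolding dist_majorant_def q_def[symmetric] q(2) using q(1) t0_pos by (simp add: field_simps)
  ultimately show ?thesis by simp
qed

lemma has_derivative_disp_majorant:
  assumes "t < t0"
  shows "(disp_majorant has_real_derivative (dist_majorant t + err_sup) / (2 * (t0 - t))) (at t)"
proof -
  define q where "q = sqrt (t0 - t)"
  have q: "0 < q" "t0 - t = q * q" using assms by (simp_all add: q_def)
  have "((\<lambda>y. ln (t0 - y)) has_real_derivative - 1 / (t0 - t)) (at t)"
    using assms by (auto intro!: derivative_eq_intros simp: divide_simps)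
  then have "(disp_majorant has_real_derivative
      (dist0 - err_sup) * (0 - (- 1 / (2 * sqrt (t0 - t))) / sqrt t0) + err_sup * (0 - (- 1 / (t0 - t)))) (at t)"
    unfolding disp_majorant_def[abs_def]
    by (intro DERIV_add DERIV_diff DERIV_const DERIV_cdivide DERIV_cmult has_real_derivative_sqrt_diff assms)
  moreover have "(dist0 - err_sup) * (0 - (- 1 / (2 * sqrt (t0 - t))) / sqrt t0) + err_sup * (0 - (- 1 / (t0 - t)))
      = (dist_majorant t + err_sup) / (2 * (t0 - t))"
    unfolding dist_majorant_def q_def[symmetric] q(2) using q(1) t0_pos by (simp add: field_simps)
  ultimately show ?thesis by simp
qed

lemma dist_majorant_le_dist0:
  assumes "0 \<le> t" and "t < t0"
  shows "dist_majorant t \<le> dist0"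
proof -
  have "sqrt (t0 - t) / sqrt t0 \<le> 1" using assms t0_pos by simp
  then have "(dist0 - err_sup) * (sqrt (t0 - t) / sqrt t0) \<le> dist0 - err_sup"
    by (rule mult_left_le) (use err_sup_le_dist0 in simp)
  then show ?thesis by (simp add: dist_majorant_def)
qed

lemma dist_bound_extends_right:
  assumes t: "t \<in> {0..<horizon}" and "0 < \<eta>" and t_tube: "X t \<in> tube r M"
    and dist_t: "infdist (X t) M \<le> dist_majorant t + \<eta> * t"
  shows "\<exists>h>0. \<forall>y\<in>{t<..<t+h}. infdist (X y) M \<le> dist_majorant y + \<eta> * y"
proof -
  define s where "s = t0 - t"
  define p where "p = nearest_proj M (X t)"
  define E where "E = e (X t) s"
  define V where "V = (1/2) *\<^sub>R shat (X t) s"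
  define B' where "B' = (err_sup - dist_majorant t) / (2 * s)"
  have s: "horizon - t < s" using tau_pos by (simp add: s_def horizon_def)
  have p: "p \<in> M" "dist (X t) p = infdist (X t) M"
    using nearest_proj_below_reach[OF below_reach] t_tube by (simp_all add: p_def tube_def)
  have E: "norm E \<le> err_sup"
    using err_bound[OF t_tube] t by (simp add: E_def s_def horizon_def)
  have V: "V = (1 / (2 * s)) *\<^sub>R (p - X t + E)"
    using velocity_eq[OF _ t_tube] t by (simp add: V_def s_def p_def E_def)
  have "(X has_vector_derivative V) (at t within {0..horizon})"
    using flow t by (simp add: V_def s_def horizon_def)
  then obtain h1 where "h1 > 0" and h1: "\<forall>y\<in>{0..horizon}. norm (y - t) < h1 \<longrightarrow>
      norm (X y - X t - (y - t) *\<^sub>R V) \<le> \<eta> / 2 * norm (y - t)"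
    unfolding has_vector_derivative_def has_derivative_within_alt
    using half_gt_zero[OF \<open>0 < \<eta>\<close>] by blast
  have "t < t0" using t horizon_less by simp
  then obtain h2 where "h2 > 0" and h2: "\<forall>y\<in>{t<..<t+h2}. dist_majorant t + (y - t) * (B' - \<eta> / 2) \<le> dist_majorant y"
    using has_real_derivative_right_lower_bound[OF has_derivative_dist_majorant half_gt_zero[OF \<open>0 < \<eta>\<close>]]
    unfolding B'_def s_def by blast
  define h where "h = min (min h1 h2) (horizon - t)"
  have "infdist (X y) M \<le> dist_majorant y + \<eta> * y" if y: "y \<in> {t<..<t+h}" for y
  proof -
    define u where "u = y - t"
    define \<theta> where "\<theta> = u / (2 * s)"
    have u: "0 < u" "u < h1" "u < h2" "u < s" using y s by (auto simp: u_def h_def)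
    have \<theta>: "0 \<le> \<theta>" "\<theta> \<le> 1" using u by (auto simp: \<theta>_def)
    have step: "X t + u *\<^sub>R V = X t + \<theta> *\<^sub>R (p - X t + E)"
      by (simp add: V \<theta>_def)
    have y_near: "y \<in> {0..horizon}" "norm (y - t) < h1" using y t u by (auto simp: h_def u_def)
    have "norm (X y - X t - u *\<^sub>R V) \<le> \<eta> / 2 * u"
      using h1[rule_format, OF y_near] u by (simp add: u_def)
    then have rem: "dist (X y) (X t + u *\<^sub>R V) \<le> \<eta> / 2 * u"
      by (simp add: dist_norm diff_diff_eq)
    have "infdist (X t + u *\<^sub>R V) M \<le> (1 - \<theta>) * dist (X t) p + \<theta> * norm E"
      unfolding step by (rule infdist_convex_step_le[OF p(1) \<theta>])
    also have "\<dots> \<le> (1 - \<theta>) * (dist_majorant t + \<eta> * t) + \<theta> * err_sup"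
      using p(2) dist_t E \<theta> by (intro add_mono mult_left_mono) auto
    finally have "infdist (X t + u *\<^sub>R V) M \<le> (1 - \<theta>) * (dist_majorant t + \<eta> * t) + \<theta> * err_sup" .
    moreover have "infdist (X y) M \<le> infdist (X t + u *\<^sub>R V) M + dist (X y) (X t + u *\<^sub>R V)"
      by (rule infdist_triangle)
    moreover have "(1 - \<theta>) * (dist_majorant t + \<eta> * t) + \<theta> * err_sup
        = dist_majorant t + u * B' + \<eta> * t - \<theta> * (\<eta> * t)"
      by (simp add: \<theta>_def B'_def algebra_simps diff_divide_distrib)
    moreover have "0 \<le> \<theta> * (\<eta> * t)" using \<theta> t \<open>0 < \<eta>\<close> by simp
    moreover have "dist_majorant t + u * B' - \<eta> / 2 * u \<le> dist_majorant y"
      using h2[rule_format, of y] u by (simp add: u_def algebra_simps)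
    moreover have "\<eta> * y = \<eta> * t + \<eta> * u" by (simp add: u_def algebra_simps)
    ultimately show ?thesis using rem by linarith
  qed
  moreover have "0 < h" using \<open>h1 > 0\<close> \<open>h2 > 0\<close> t by (simp add: h_def)
  ultimately show ?thesis by blast
qed

lemma dist_le_majorant_plus_slack:
  assumes "0 < \<eta>" and slack: "\<eta> * horizon < r - dist0" and "t \<in> {0..horizon}"
  shows "infdist (X t) M \<le> dist_majorant t + \<eta> * t"
proof -
  have "\<forall>t\<in>{0..horizon}. infdist (X t) M - (dist_majorant t + \<eta> * t) \<le> 0"
  proof (rule continuous_nonpos_by_right_continuation)
    show "continuous_on {0..horizon} (\<lambda>t. infdist (X t) M - (dist_majorant t + \<eta> * t))"
      unfolding dist_majorant_def using horizon_less
      by (intro continuous_intros X_continuous) auto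
    show "infdist (X 0) M - (dist_majorant 0 + \<eta> * 0) \<le> 0"
      using t0_pos by (simp add: dist_majorant_def dist0_def)
  next
    fix t assume t: "0 \<le> t" "t < horizon" and "infdist (X t) M - (dist_majorant t + \<eta> * t) \<le> 0"
    then have dist_t: "infdist (X t) M \<le> dist_majorant t + \<eta> * t" by simp
    have "\<eta> * t \<le> \<eta> * horizon" using t \<open>0 < \<eta>\<close> by simp
    then have "X t \<in> tube r M"
      using dist_t dist_majorant_le_dist0[of t] t horizon_less slack by (simp add: tube_def)
    then show "\<exists>h>0. \<forall>y\<in>{t<..<t+h}. infdist (X y) M - (dist_majorant y + \<eta> * y) \<le> 0"
      using dist_bound_extends_right[OF _ \<open>0 < \<eta>\<close> _ dist_t] t by simp
  qed (use horizon_pos in simp)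
  then show ?thesis using assms(3) by simp
qed

lemma dist_le_majorant:
  assumes "t \<in> {0..horizon}"
  shows "infdist (X t) M \<le> dist_majorant t"
proof (rule field_le_epsilon)
  fix \<xi> :: real assume "0 < \<xi>"
  define \<eta> where "\<eta> = min ((r - dist0) / (2 * horizon)) (\<xi> / horizon)"
  have "0 < \<eta>" using \<open>0 < \<xi>\<close> dist0_less horizon_pos by (simp add: \<eta>_def)
  have "\<eta> * horizon \<le> (r - dist0) / (2 * horizon) * horizon"
    using horizon_pos by (intro mult_right_mono) (simp_all add: \<eta>_def)
  then have slack: "\<eta> * horizon < r - dist0" using horizon_pos dist0_less by simp
  have "\<eta> * t \<le> \<eta> * horizon" using assms \<open>0 < \<eta>\<close> by simp
  also have "\<dots> \<le> \<xi> / horizon * horizon"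
    using horizon_pos by (intro mult_right_mono) (simp_all add: \<eta>_def)
  finally have "\<eta> * t \<le> \<xi>" using horizon_pos by simp
  then show "infdist (X t) M \<le> dist_majorant t + \<xi>"
    using dist_le_majorant_plus_slack[OF \<open>0 < \<eta>\<close> slack assms] by linarith
qed

lemma X_in_tube: "t \<in> {0..horizon} \<Longrightarrow> X t \<in> tube r M"
  using dist_le_majorant dist_majorant_le_dist0[of t] horizon_less dist0_less
  by (force simp: tube_def)

lemma displacement_le_disp_majorant: "norm (X horizon - X 0) \<le> disp_majorant horizon"
proof -
  have "norm (X horizon - X 0) \<le> disp_majorant horizon - disp_majorant 0"
  proof (rule norm_increment_le_majorant_increment)
    fix t assume t: "t \<in> {0..horizon}"
    show "(X has_vector_derivative (1/2) *\<^sub>R shat (X t) (t0 - t)) (at t within {0..horizon})"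
      using flow t by (simp add: horizon_def)
    show "(disp_majorant has_real_derivative (dist_majorant t + err_sup) / (2 * (t0 - t))) (at t within {0..horizon})"
      using has_derivative_disp_majorant t horizon_less by (auto intro: has_field_derivative_at_within)
    have "(infdist (X t) M + err_sup) / (2 * (t0 - t)) \<le> (dist_majorant t + err_sup) / (2 * (t0 - t))"
      using dist_le_majorant[OF t] t horizon_less by (intro divide_right_mono) auto
    then show "norm ((1/2) *\<^sub>R shat (X t) (t0 - t)) \<le> (dist_majorant t + err_sup) / (2 * (t0 - t))"
      using norm_velocity_le[OF t X_in_tube[OF t]] by linarith
  qed (use horizon_pos in simp)
  then show ?thesis using t0_pos by (simp add: disp_majorant_def)
qed

lemma disp_majorant_horizon_le: "disp_majorant horizon \<le> dist0 + err_sup * ln (t0 / \<tau>)"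
proof -
  have "disp_majorant horizon = (dist0 - err_sup) * (1 - sqrt \<tau> / sqrt t0) + err_sup * ln (t0 / \<tau>)"
    using tau_pos t0_pos by (simp add: disp_majorant_def horizon_def ln_div)
  moreover have "(dist0 - err_sup) * (1 - sqrt \<tau> / sqrt t0) \<le> dist0 - err_sup"
    using err_sup_le_dist0 tau_pos t0_pos by (simp add: mult_left_le)
  ultimately show ?thesis using err_sup_nonneg by linarith
qed

theorem displacement_bound: "norm (X (t0 - \<tau>) - X 0) \<le> infdist (X 0) M + err_sup * ln (t0 / \<tau>)"
  using displacement_le_disp_majorant disp_majorant_horizon_le by (simp add: horizon_def dist0_def)

end

theorem lemmaG1:
  shows "\<exists>C::real. \<forall>(M :: (real^'n) set) r \<tau> t0
      (shat :: real^'n \<Rightarrow> real \<Rightarrow> real^'n) (e :: real^'n \<Rightarrow> real \<Rightarrow> real^'n)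
      (X :: real \<Rightarrow> real^'n).
    closed M \<and> embedded_submanifold M \<and>
    0 < \<tau> \<and> \<tau> < t0 \<and>
    0 < r \<and> ereal r < reach M \<and>
    (\<forall>t\<in>{\<tau>..t0}. \<forall>x\<in>tube r M.
        shat x t = - ((x - nearest_proj M x) /\<^sub>R t) + e x t /\<^sub>R t) \<and>
    bdd_above ((\<lambda>(x, t). norm (e x t)) ` (tube r M \<times> {\<tau>..t0})) \<and>
    (\<forall>t\<in>{0..t0 - \<tau>}.
        (X has_vector_derivative ((1/2) *\<^sub>R shat (X t) (t0 - t))) (at t within {0..t0 - \<tau>})) \<and>
    X 0 \<in> tube r M \<and>
    sqrt ((1/2) * (infdist (X 0) M)\<^sup>2)
        \<ge> (SUP (x, t) \<in> tube r M \<times> {\<tau>..t0}. norm (e x t))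
    \<longrightarrow> norm (X (t0 - \<tau>) - X 0)
        \<le> infdist (X 0) M + C * ((SUP (x, t) \<in> tube r M \<times> {\<tau>..t0}. norm (e x t)) * ln (t0 / \<tau>))"
  apply (intro exI[of _ 1] allI impI)
  subgoal premises hyps for M r \<tau> t0 shat e X
  proof -
    interpret score_flow M r \<tau> t0 shat e X
      using hyps by unfold_locales auto
    show ?thesis using displacement_bound by (simp add: err_sup_def)
  qed
  done

end
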